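(* A connected graph $G$ is well-bicovered with $b(G)=2$ if and only if $G=K_n$ for some $n\ge 2$.
   Context: All graphs are finite and simple; "subgraph" means induced subgraph. $b(G)$ denotes the maximum order of an induced bipartite subgraph of $G$. $G$ is well-bicovered if every vertex-inclusion-maximal induced bipartite subgraph of $G$ has the same order. *)

theory Defs
  imports Main
begin

definition simple_graph :: "'a set \<Rightarrow> ('a \<Rightarrow> 'a \<Rightarrow> bool) \<Rightarrow> bool" where
  "simple_graph V E \<longleftrightarrow> finite V \<and> (\<forall>u v. E u v \<longrightarrow> u \<in> V \<and> v \<in> V)
     \<and> (\<forall>u v. E u v \<longrightarrow> E v u) \<and> (\<forall>v. \<not> E v v)"

definition connected_graph :: "'a set \<Rightarrow> ('a \<Rightarrow> 'a \<Rightarrow> bool) \<Rightarrow> bool" where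
  "connected_graph V E \<longleftrightarrow> V \<noteq> {} \<and>
     (\<forall>u\<in>V. \<forall>v\<in>V. (u, v) \<in> {(x, y). E x y}\<^sup>*)"

definition independent :: "('a \<Rightarrow> 'a \<Rightarrow> bool) \<Rightarrow> 'a set \<Rightarrow> bool" where
  "independent E A \<longleftrightarrow> (\<forall>u\<in>A. \<forall>v\<in>A. \<not> E u v)"

definition induces_bipartite :: "'a set \<Rightarrow> ('a \<Rightarrow> 'a \<Rightarrow> bool) \<Rightarrow> 'a set \<Rightarrow> bool" where
  "induces_bipartite V E S \<longleftrightarrow> S \<subseteq> V \<and>
     (\<exists>A B. A \<union> B = S \<and> A \<inter> B = {} \<and> independent E A \<and> independent E B)"

definition maximal_bipartite :: "'a set \<Rightarrow> ('a \<Rightarrow> 'a \<Rightarrow> bool) \<Rightarrow> 'a set \<Rightarrow> bool" where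
  "maximal_bipartite V E S \<longleftrightarrow> induces_bipartite V E S \<and>
     (\<forall>T. induces_bipartite V E T \<and> S \<subseteq> T \<longrightarrow> T = S)"

definition bip_number :: "'a set \<Rightarrow> ('a \<Rightarrow> 'a \<Rightarrow> bool) \<Rightarrow> nat" where
  "bip_number V E = Max (card ` {S. induces_bipartite V E S})"

definition well_bicovered :: "'a set \<Rightarrow> ('a \<Rightarrow> 'a \<Rightarrow> bool) \<Rightarrow> bool" where
  "well_bicovered V E \<longleftrightarrow>
     (\<forall>S T. maximal_bipartite V E S \<and> maximal_bipartite V E T \<longrightarrow> card S = card T)"

definition is_complete_graph :: "'a set \<Rightarrow> ('a \<Rightarrow> 'a \<Rightarrow> bool) \<Rightarrow> nat \<Rightarrow> bool" where
  "is_complete_graph V E n \<longleftrightarrow> card V = n \<and> (\<forall>u\<in>V. \<forall>v\<in>V. u \<noteq> v \<longrightarrow> E u v)"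

end

theory Submission
  imports Defs
begin

text \<open>An independent set of a complete graph has at most one vertex, so every induced
  bipartite subgraph of \<open>K\<^sub>n\<close> has at most two vertices, and any set of at most one vertex can
  be extended by a further vertex; hence all maximal ones have exactly two. Conversely, if
  \<open>b(G) = 2\<close> and \<open>u, v\<close> are distinct non-adjacent vertices of a connected graph, then
  \<open>u\<close> has a neighbour \<open>w\<close>, and \<open>{u, v} \<union> {w}\<close> is an induced bipartite subgraph on three
  vertices.\<close>

lemma finite_card_bipartite_sets:
  assumes "finite V"
  shows "finite (card ` {S. induces_bipartite V E S})"
proof -
  have "{S. induces_bipartite V E S} \<subseteq> Pow V"
    by (auto simp: induces_bipartite_def)
  with assms show ?thesis
    by (meson finite_Pow_iff finite_imageI finite_subset)
qed

lemma card_le_bip_number: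
  assumes "finite V" and "induces_bipartite V E S"
  shows "card S \<le> bip_number V E"
  unfolding bip_number_def using finite_card_bipartite_sets[OF assms(1)] assms(2) by auto

lemma bip_number_attained:
  assumes "finite V"
  obtains S where "induces_bipartite V E S" and "card S = bip_number V E"
proof -
  have "induces_bipartite V E {}"
    by (auto simp: induces_bipartite_def independent_def)
  then have "bip_number V E \<in> card ` {S. induces_bipartite V E S}"
    unfolding bip_number_def using finite_card_bipartite_sets[OF assms]
    by (intro Max_in) auto
  then show ?thesis using that by auto
qed

lemma bip_number_le_card:
  assumes "finite V"
  shows "bip_number V E \<le> card V"
proof -
  obtain S where "induces_bipartite V E S" and "card S = bip_number V E"
    using bip_number_attained[OF assms] .
  then show ?thesis
    using assms by (metis card_mono induces_bipartite_def)
qed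

lemma independent_singleton:
  assumes "\<not> E v v"
  shows "independent E {v}"
  using assms by (simp add: independent_def)

lemma independent_card_le_1:
  assumes "finite A" and "card A \<le> 1" and "\<And>v. \<not> E v v"
  shows "independent E A"
  using assms card_le_Suc0_iff_eq[OF assms(1)] by (auto simp: independent_def)

lemma induces_bipartite_insert:
  assumes "independent E A" and "A \<subseteq> V" and "v \<in> V" and "\<not> E v v"
  shows "induces_bipartite V E (insert v A)"
proof (cases "v \<in> A")
  case True
  then show ?thesis
    unfolding induces_bipartite_def using assms
    by (intro conjI exI[of _ A] exI[of _ "{}"]) (auto simp: independent_def)
next
  case False
  then show ?thesis
    unfolding induces_bipartite_def using assms independent_singleton[of E v]
    by (intro conjI exI[of _ A] exI[of _ "{v}"]) auto
qed

lemma card_independent_complete: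
  assumes "\<forall>u\<in>V. \<forall>v\<in>V. u \<noteq> v \<longrightarrow> E u v" and "A \<subseteq> V" and "independent E A"
  shows "card A \<le> 1"
proof (cases "finite A")
  case True
  have "\<forall>x\<in>A. \<forall>y\<in>A. x = y"
    using assms unfolding independent_def by blast
  with True show ?thesis
    using card_le_Suc0_iff_eq by auto
qed simp

lemma card_bipartite_complete:
  assumes "\<forall>u\<in>V. \<forall>v\<in>V. u \<noteq> v \<longrightarrow> E u v" and "induces_bipartite V E S"
  shows "card S \<le> 2"
proof -
  obtain A B where "A \<union> B = S" "independent E A" "independent E B" "S \<subseteq> V"
    using assms(2) unfolding induces_bipartite_def by blast
  then have "card A \<le> 1" "card B \<le> 1" and "card S \<le> card A + card B"
    using card_independent_complete[OF assms(1)] card_Un_le by auto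
  then show ?thesis by simp
qed

lemma two_vertices_induce_bipartite:
  assumes "x \<in> V" and "y \<in> V" and "\<And>v. \<not> E v v"
  shows "induces_bipartite V E {x, y}"
  using induces_bipartite_insert[OF independent_singleton[of E y], of V x] assms by simp

lemma bip_number_complete:
  assumes "finite V" and "\<And>v. \<not> E v v" and "card V \<ge> 2"
    and "\<forall>u\<in>V. \<forall>v\<in>V. u \<noteq> v \<longrightarrow> E u v"
  shows "bip_number V E = 2"
proof (rule antisym)
  obtain S where S: "induces_bipartite V E S" "card S = bip_number V E"
    using bip_number_attained[OF assms(1)] .
  then show "bip_number V E \<le> 2"
    using card_bipartite_complete[OF assms(4) S(1)] by simp
next
  have "\<not> card V \<le> Suc 0"
    using assms(3) by simp
  then obtain x y where xy: "x \<in> V" "y \<in> V" "x \<noteq> y"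
    using card_le_Suc0_iff_eq[OF assms(1)] by blast
  then have "card {x, y} \<le> bip_number V E"
    using card_le_bip_number[OF assms(1) two_vertices_induce_bipartite] assms(2) by blast
  with xy(3) show "2 \<le> bip_number V E"
    by simp
qed

lemma card_maximal_bipartite_complete:
  assumes "finite V" and "\<And>v. \<not> E v v" and "card V \<ge> 2"
    and "\<forall>u\<in>V. \<forall>v\<in>V. u \<noteq> v \<longrightarrow> E u v" and "maximal_bipartite V E S"
  shows "card S = 2"
proof (rule ccontr)
  assume "card S \<noteq> 2"
  have S: "induces_bipartite V E S" "S \<subseteq> V"
    using assms(5) by (auto simp: maximal_bipartite_def induces_bipartite_def)
  with \<open>card S \<noteq> 2\<close> have "card S \<le> 1"
    using card_bipartite_complete[OF assms(4) S(1)] by simp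
  with assms(3) have "S \<noteq> V"
    by auto
  then obtain y where y: "y \<in> V" "y \<notin> S"
    using S(2) by blast
  have "finite S"
    using S(2) assms(1) by (rule finite_subset)
  then have "independent E S"
    using \<open>card S \<le> 1\<close> assms(2) by (rule independent_card_le_1)
  then have "induces_bipartite V E (insert y S)"
    using S(2) y(1) assms(2) by (rule induces_bipartite_insert)
  then have "insert y S = S"
    using assms(5) unfolding maximal_bipartite_def by blast
  with y(2) show False
    by blast
qed

lemma well_bicovered_complete:
  assumes "finite V" and "\<And>v. \<not> E v v" and "card V \<ge> 2"
    and "\<forall>u\<in>V. \<forall>v\<in>V. u \<noteq> v \<longrightarrow> E u v"
  shows "well_bicovered V E"
  using card_maximal_bipartite_complete[OF assms] by (simp add: well_bicovered_def)

lemma complete_if_bip_number_le_2: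
  assumes G: "simple_graph V E" "connected_graph V E" and "bip_number V E \<le> 2"
  shows "\<forall>u\<in>V. \<forall>v\<in>V. u \<noteq> v \<longrightarrow> E u v"
proof (intro ballI impI, rule ccontr)
  fix u v assume uv: "u \<in> V" "v \<in> V" "u \<noteq> v" "\<not> E u v"
  have fin: "finite V" and irrefl: "\<And>x. \<not> E x x" and sym: "\<not> E v u"
    using G(1) uv(4) unfolding simple_graph_def by blast+
  have "(u, v) \<in> {(x, y). E x y}\<^sup>*"
    using G(2) uv unfolding connected_graph_def by blast
  then obtain w where "E u w"
    using uv(3) by (cases rule: converse_rtranclE) auto
  then have w: "w \<in> V" "w \<noteq> u" "w \<noteq> v"
    using G(1) irrefl uv(4) unfolding simple_graph_def by auto
  have "independent E {u, v}"
    using irrefl uv(4) sym unfolding independent_def by blast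
  then have "induces_bipartite V E (insert w {u, v})"
    using uv(1,2) by (intro induces_bipartite_insert[OF _ _ w(1) irrefl]) auto
  then have "card (insert w {u, v}) \<le> 2"
    using card_le_bip_number[OF fin] assms(3) by fastforce
  with uv(3) w(2,3) show False
    by simp
qed

theorem mainTheorem7:
  fixes V :: "'a set" and E :: "'a \<Rightarrow> 'a \<Rightarrow> bool"
  assumes "simple_graph V E" and "connected_graph V E"
  shows "(well_bicovered V E \<and> bip_number V E = 2) \<longleftrightarrow>
         (\<exists>n\<ge>2. is_complete_graph V E n)"
proof -
  have fin: "finite V" and irrefl: "\<And>v. \<not> E v v"
    using assms(1) by (auto simp: simple_graph_def)
  show ?thesis
  proof
    assume "well_bicovered V E \<and> bip_number V E = 2"
    then have b: "bip_number V E = 2" ..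
    have "card V \<ge> 2"
      using bip_number_le_card[OF fin, of E] b by simp
    moreover have "\<forall>u\<in>V. \<forall>v\<in>V. u \<noteq> v \<longrightarrow> E u v"
      using complete_if_bip_number_le_2[OF assms] b by simp
    ultimately show "\<exists>n\<ge>2. is_complete_graph V E n"
      by (auto simp: is_complete_graph_def)
  next
    assume "\<exists>n\<ge>2. is_complete_graph V E n"
    then have "card V \<ge> 2" and "\<forall>u\<in>V. \<forall>v\<in>V. u \<noteq> v \<longrightarrow> E u v"
      by (auto simp: is_complete_graph_def)
    then show "well_bicovered V E \<and> bip_number V E = 2"
      using well_bicovered_complete bip_number_complete fin irrefl by blast
  qed
qed

end
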